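(* Let $(X,d^\star)$ be a $\star$-metric space and $\{x_n\}$ a Cauchy sequence in $(X,d^\star)$. If $\{x_n\}$ has an accumulation point $x_0\in X$, then $\{x_n\}$ converges to $x_0$ under $d^\star$, i.e. for every $\epsilon>0$ there is $k$ with $d^\star(x_0,x_n)<\epsilon$ for all $n\ge k$.
   Context: A $t$-definer is a function $\star:[0,\infty)\times[0,\infty)\to[0,\infty)$ such that for all $a,b,c\ge 0$: $a\star b=b\star a$; $a\star(b\star c)=(a\star b)\star c$; if $a\le b$ then $a\star c\le b\star c$; $a\star 0=a$; and $\star$ is continuous in its first variable with respect to the Euclidean topology. Given a nonempty set $X$ and a $t$-definer $\star$, a $\star$-metric on $X$ is a function $d^\star:X\times X\to[0,\infty)$ such that for all $x,y,z\in X$: $d^\star(x,y)=0$ iff $x=y$; $d^\star(x,y)=d^\star(y,x)$; and $d^\star(x,y)\le d^\star(x,z)\star d^\star(z,y)$. A sequence $\{x_n\}$ is Cauchy if for every $\epsilon>0$ there is $k\in\mathbb{N}$ with $d^\star(x_n,x_m)<\epsilon$ for all $m,n\ge k$. An accumulation point of the sequence $\{x_n\}$ is a point $x_0$ such that for every $\epsilon>0$ there are infinitely many $n$ with $d^\star(x_0,x_n)<\epsilon$ (equivalently, every neighborhood of $x_0$ in the topology induced by $d^\star$ contains $x_n$ for infinitely many $n$). *)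

theory Defs
  imports "HOL-Analysis.Analysis"
begin

text \<open>A t-definer: a binary operation on [0,\<infinity>), modelled as a real function
  that maps nonnegative arguments to nonnegative values.\<close>
definition t_definer :: "(real \<Rightarrow> real \<Rightarrow> real) \<Rightarrow> bool" where
  "t_definer star \<longleftrightarrow>
     (\<forall>a b. a \<ge> 0 \<longrightarrow> b \<ge> 0 \<longrightarrow> star a b \<ge> 0) \<and>
     (\<forall>a b. a \<ge> 0 \<longrightarrow> b \<ge> 0 \<longrightarrow> star a b = star b a) \<and>
     (\<forall>a b c. a \<ge> 0 \<longrightarrow> b \<ge> 0 \<longrightarrow> c \<ge> 0 \<longrightarrow> star a (star b c) = star (star a b) c) \<and>
     (\<forall>a b c. a \<ge> 0 \<longrightarrow> b \<ge> 0 \<longrightarrow> c \<ge> 0 \<longrightarrow> a \<le> b \<longrightarrow> star a c \<le> star b c) \<and>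
     (\<forall>a. a \<ge> 0 \<longrightarrow> star a 0 = a) \<and>
     (\<forall>b. b \<ge> 0 \<longrightarrow> continuous_on {0..} (\<lambda>a. star a b))"

definition star_metric :: "'a set \<Rightarrow> (real \<Rightarrow> real \<Rightarrow> real) \<Rightarrow> ('a \<Rightarrow> 'a \<Rightarrow> real) \<Rightarrow> bool" where
  "star_metric X star d \<longleftrightarrow>
     (\<forall>x\<in>X. \<forall>y\<in>X. d x y \<ge> 0) \<and>
     (\<forall>x\<in>X. \<forall>y\<in>X. d x y = 0 \<longleftrightarrow> x = y) \<and>
     (\<forall>x\<in>X. \<forall>y\<in>X. d x y = d y x) \<and>
     (\<forall>x\<in>X. \<forall>y\<in>X. \<forall>z\<in>X. d x y \<le> star (d x z) (d z y))"

definition star_cauchy :: "('a \<Rightarrow> 'a \<Rightarrow> real) \<Rightarrow> (nat \<Rightarrow> 'a) \<Rightarrow> bool" where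
  "star_cauchy d x \<longleftrightarrow> (\<forall>\<epsilon>>0. \<exists>k. \<forall>m\<ge>k. \<forall>n\<ge>k. d (x n) (x m) < \<epsilon>)"

definition star_accumulation_point :: "('a \<Rightarrow> 'a \<Rightarrow> real) \<Rightarrow> (nat \<Rightarrow> 'a) \<Rightarrow> 'a \<Rightarrow> bool" where
  "star_accumulation_point d x x0 \<longleftrightarrow> (\<forall>\<epsilon>>0. infinite {n. d x0 (x n) < \<epsilon>})"

end

theory Submission
  imports Defs
begin

text \<open>Continuity of \<open>a \<mapsto> a \<star> \<epsilon>/2\<close> at \<open>0\<close>, where its value is \<open>\<epsilon>/2\<close>, gives a radius \<open>\<delta>\<close> with
  \<open>a \<star> \<epsilon>/2 < \<epsilon>\<close> for \<open>a < \<delta>\<close>. Choosing a Cauchy index \<open>k\<close> for \<open>\<epsilon>/2\<close> and a term \<open>x\<^sub>m\<close>, \<open>m \<ge> k\<close>,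
  within \<open>\<delta>\<close> of the accumulation point \<open>x\<^sub>0\<close>, the \<open>\<star>\<close>-triangle inequality and monotonicity give
  \<open>d(x\<^sub>0,x\<^sub>n) \<le> d(x\<^sub>0,x\<^sub>m) \<star> d(x\<^sub>m,x\<^sub>n) \<le> d(x\<^sub>0,x\<^sub>m) \<star> \<epsilon>/2 < \<epsilon>\<close> for all \<open>n \<ge> k\<close>.\<close>

lemma t_definer_commute:
  "t_definer star \<Longrightarrow> 0 \<le> a \<Longrightarrow> 0 \<le> b \<Longrightarrow> star a b = star b a"
  unfolding t_definer_def by (elim conjE) simp

lemma t_definer_mono_left:
  "t_definer star \<Longrightarrow> 0 \<le> a \<Longrightarrow> 0 \<le> c \<Longrightarrow> a \<le> b \<Longrightarrow> star a c \<le> star b c"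
  unfolding t_definer_def by (elim conjE) simp

lemma t_definer_zero_left:
  "t_definer star \<Longrightarrow> 0 \<le> b \<Longrightarrow> star 0 b = b"
  unfolding t_definer_def by (elim conjE) (metis order_refl)

lemma star_metric_nonneg:
  "star_metric X star d \<Longrightarrow> x \<in> X \<Longrightarrow> y \<in> X \<Longrightarrow> 0 \<le> d x y"
  by (simp add: star_metric_def)

lemma star_metric_triangle:
  "star_metric X star d \<Longrightarrow> x \<in> X \<Longrightarrow> y \<in> X \<Longrightarrow> z \<in> X \<Longrightarrow> d x z \<le> star (d x y) (d y z)"
  by (simp add: star_metric_def)

lemma t_definer_less_near_zero:
  assumes "t_definer star" "b \<ge> 0" "b < c"
  obtains \<delta> where "\<delta> > 0" "\<And>a. 0 \<le> a \<Longrightarrow> a < \<delta> \<Longrightarrow> star a b < c"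
proof -
  have "continuous_on {0..} (\<lambda>a. star a b)"
    using assms(1,2) unfolding t_definer_def by blast
  moreover have "star 0 b = b"
    using t_definer_zero_left[OF assms(1,2)] .
  ultimately obtain \<delta> where "\<delta> > 0"
    and \<delta>: "\<And>a. a \<in> {0..} \<Longrightarrow> dist a 0 < \<delta> \<Longrightarrow> dist (star a b) b < c - b"
    unfolding continuous_on_iff using assms(3) by (metis atLeast_iff diff_gt_0_iff_gt order_refl)
  show thesis
  proof
    show "\<delta> > 0" by fact
    fix a :: real assume "0 \<le> a" "a < \<delta>"
    then have "\<bar>star a b - b\<bar> < c - b"
      using \<delta> by (simp add: dist_real_def)
    then show "star a b < c" by linarith
  qed
qed

lemma star_metric_triangle_le:
  assumes "t_definer star" "star_metric X star d" "x \<in> X" "y \<in> X" "z \<in> X" "d y z \<le> b"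
  shows "d x z \<le> star (d x y) b"
proof -
  have xy: "0 \<le> d x y" and yz: "0 \<le> d y z"
    using star_metric_nonneg[OF assms(2)] assms(3-5) by auto
  with assms(6) have b: "0 \<le> b"
    by linarith
  have "d x z \<le> star (d x y) (d y z)"
    using star_metric_triangle[OF assms(2-5)] .
  also have "\<dots> = star (d y z) (d x y)"
    using t_definer_commute[OF assms(1) xy yz] .
  also have "\<dots> \<le> star b (d x y)"
    using t_definer_mono_left[OF assms(1) yz xy assms(6)] .
  also have "\<dots> = star (d x y) b"
    using t_definer_commute[OF assms(1) xy b] by (rule sym)
  finally show ?thesis .
qed

theorem proposition4p4:
  fixes X :: "'a set" and star :: "real \<Rightarrow> real \<Rightarrow> real" and d :: "'a \<Rightarrow> 'a \<Rightarrow> real"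
    and x :: "nat \<Rightarrow> 'a" and x0 :: 'a
  assumes "X \<noteq> {}"
    and "t_definer star"
    and "star_metric X star d"
    and "\<forall>n. x n \<in> X"
    and "star_cauchy d x"
    and "x0 \<in> X"
    and "star_accumulation_point d x x0"
  shows "\<forall>\<epsilon>>0. \<exists>k. \<forall>n\<ge>k. d x0 (x n) < \<epsilon>"
proof (intro allI impI)
  fix \<epsilon> :: real assume "\<epsilon> > 0"
  then have "0 \<le> \<epsilon>/2" "\<epsilon>/2 < \<epsilon>"
    by simp_all
  then obtain \<delta> where "\<delta> > 0" and \<delta>: "\<And>a. 0 \<le> a \<Longrightarrow> a < \<delta> \<Longrightarrow> star a (\<epsilon>/2) < \<epsilon>"
    using t_definer_less_near_zero[OF assms(2)] by blast
  obtain k where k: "\<And>m n. m \<ge> k \<Longrightarrow> n \<ge> k \<Longrightarrow> d (x n) (x m) < \<epsilon>/2"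
    using assms(5) \<open>\<epsilon> > 0\<close> unfolding star_cauchy_def by (meson half_gt_zero)
  have "infinite {n. d x0 (x n) < \<delta>}"
    using assms(7) \<open>\<delta> > 0\<close> unfolding star_accumulation_point_def by blast
  then obtain m where "m \<ge> k" "d x0 (x m) < \<delta>"
    unfolding infinite_nat_iff_unbounded_le by blast
  have "d x0 (x n) < \<epsilon>" if "n \<ge> k" for n
  proof -
    have "d x0 (x n) \<le> star (d x0 (x m)) (\<epsilon>/2)"
      using star_metric_triangle_le[OF assms(2,3,6)] assms(4) k[OF that \<open>m \<ge> k\<close>]
      by (simp add: less_imp_le)
    also have "\<dots> < \<epsilon>"
      using \<delta> star_metric_nonneg[OF assms(3,6)] assms(4) \<open>d x0 (x m) < \<delta>\<close> by blast
    finally show ?thesis .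
  qed
  then show "\<exists>k. \<forall>n\<ge>k. d x0 (x n) < \<epsilon>" by blast
qed

end
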